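(* Let $\mu_1,\mu_2$ be finite Borel measures on $M$ with $\mu_1\geqslant\mu_2$, i.e. $\mu_1=\mu_2+m$ for some non-negative Borel measure $m$. Let $\mathcal A$ be a finite measurable partition and $\mathcal B$ a measurable partition. Then $$H_{\mu_1}(\mathcal A\mid\mathcal B)\geqslant H_{\mu_2}(\mathcal A\mid\mathcal B).$$
   Context: For a probability measure $\mu$, $H_\mu(\mathcal A\mid\mathcal B)=\int H_{\mu_{x,\mathcal B}}(\mathcal A)\,\mathrm d\mu(x)$ with $\{\mu_{x,\mathcal B}\}$ the conditional measures of $\mu$ on atoms of $\mathcal B$ and $H_\nu(\mathcal A)=-\sum_{A\in\mathcal A}\nu(A)\log\nu(A)$. For a finite nonzero Borel measure $\mu$, $H_\mu(\mathcal A\mid\mathcal B):=\mu(M)\cdot H_{\bar\mu}(\mathcal A\mid\mathcal B)$ with $\bar\mu=\mu/\mu(M)$ (and $0$ for the zero measure). *)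

theory Defs
  imports "HOL-Probability.Probability"
begin

definition meas_partition :: "'a::topological_space set set \<Rightarrow> bool" where
  "meas_partition P \<longleftrightarrow> P \<subseteq> sets borel \<and> {} \<notin> P \<and> \<Union>P = UNIV \<and>
     (\<forall>p\<in>P. \<forall>q\<in>P. p \<noteq> q \<longrightarrow> p \<inter> q = {})"

definition atom_algebra :: "'a::topological_space set set \<Rightarrow> 'a measure" where
  "atom_algebra B = sigma UNIV {S \<in> sets borel. \<forall>b\<in>B. b \<subseteq> S \<or> b \<inter> S = {}}"

text \<open>Conditional measure of the set A on the atom of B containing x,
w.r.t. the measure mu (defined mu-a.e. as conditional expectation of the indicator).\<close>
definition cond_meas :: "'a::topological_space measure \<Rightarrow> 'a set set \<Rightarrow> 'a \<Rightarrow> 'a set \<Rightarrow> real" where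
  "cond_meas mu B x A = real_cond_exp mu (atom_algebra B) (indicator A) x"

definition cond_entropy_prob :: "'a::topological_space measure \<Rightarrow> 'a set set \<Rightarrow> 'a set set \<Rightarrow> real" where
  "cond_entropy_prob mu A B =
     (\<integral>x. (\<Sum>a\<in>A. - (cond_meas mu B x a * ln (cond_meas mu B x a))) \<partial>mu)"

definition cond_entropy :: "'a::topological_space measure \<Rightarrow> 'a set set \<Rightarrow> 'a set set \<Rightarrow> real" where
  "cond_entropy mu A B =
     (if measure mu (space mu) = 0 then 0
      else measure mu (space mu) *
        cond_entropy_prob (scale_measure (ennreal (1 / measure mu (space mu))) mu) A B)"

end

theory Submission
  imports Defs "HOL-Real_Asymp.Real_Asymp"
begin

text \<open>Write \<open>\<phi>(t) = -t ln t\<close> and \<open>E\<^sub>a\<close> for the conditional probability of \<open>a \<in> A\<close> given the atoms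
of \<open>B\<close>. Concavity of \<open>\<phi>\<close> gives \<open>\<phi>(t) \<le> (-ln s - 1) t + s\<close> for all \<open>s > 0\<close>, with equality at
\<open>s = t\<close>. Hence for every \<open>B\<close>-measurable family \<open>s\<^sub>a\<close> with values in \<open>(0,1]\<close>, since \<open>E\<^sub>a\<close> may be
replaced by the indicator of \<open>a\<close> against \<open>B\<close>-measurable weights,
\<open>H\<^sub>\<mu>(A|B) \<le> \<integral> \<Sum>\<^sub>a (-ln s\<^sub>a - 1) 1\<^sub>a + s\<^sub>a d\<mu>\<close>,
with near equality when \<open>s\<^sub>a\<close> is \<open>E\<^sub>a\<close> truncated below at \<open>\<epsilon>\<close>. The right-hand side involves no
conditional expectation, and its integrand is nonnegative wherever \<open>\<Sum>\<^sub>a s\<^sub>a \<ge> 1\<close>, so it grows with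
\<open>\<mu>\<close>. Choosing \<open>s\<close> from \<open>\<mu>\<^sub>1\<close> yields \<open>H\<^sub>\<mu>\<^sub>2 \<le> H\<^sub>\<mu>\<^sub>1 + |A| \<mu>\<^sub>1(M) (\<epsilon> - \<epsilon> ln \<epsilon>)\<close>; let \<open>\<epsilon> \<rightarrow> 0\<close>.\<close>

lemma neg_mult_ln_le_tangent:
  fixes t s :: real
  assumes "0 \<le> t" "0 < s"
  shows "- (t * ln t) \<le> (- ln s - 1) * t + s"
proof (cases "t = 0")
  case False
  then have "t > 0" using assms by simp
  have "ln s - ln t = ln (s / t)" using \<open>t > 0\<close> assms by (simp add: ln_div)
  also have "\<dots> \<le> s / t - 1" using \<open>t > 0\<close> assms by (intro ln_le_minus_one) simp
  finally have "t * (ln s - ln t) \<le> t * (s / t - 1)" using \<open>t > 0\<close> by (intro mult_left_mono) auto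
  then show ?thesis using \<open>t > 0\<close> by (simp add: algebra_simps)
qed (use assms in simp)

lemma neg_mult_ln_bounds:
  fixes t :: real
  assumes "0 \<le> t" "t \<le> 1"
  shows "0 \<le> - (t * ln t)" "- (t * ln t) \<le> 1"
proof -
  show "0 \<le> - (t * ln t)"
    using assms by (cases "t = 0") (auto intro: mult_nonneg_nonpos)
  show "- (t * ln t) \<le> 1"
    using neg_mult_ln_le_tangent[of t 1] assms by simp
qed

lemma tangent_coefficients_abs_le:
  fixes s \<epsilon> :: real
  assumes "0 < \<epsilon>" "\<epsilon> \<le> s" "s \<le> 1"
  shows "\<bar>- ln s - 1\<bar> \<le> 1 - ln \<epsilon>" "\<bar>s\<bar> \<le> 1 - ln \<epsilon>"
proof -
  have "ln \<epsilon> \<le> ln s" using assms(1,2) by simp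
  moreover have "ln s \<le> 0" using assms by simp
  ultimately show "\<bar>- ln s - 1\<bar> \<le> 1 - ln \<epsilon>" "\<bar>s\<bar> \<le> 1 - ln \<epsilon>" using assms by linarith+
qed

lemma tangent_at_truncation_le:
  fixes t \<epsilon> :: real
  assumes "0 \<le> t" "t \<le> 1" "0 < \<epsilon>" "\<epsilon> \<le> 1"
  shows "(- ln (max \<epsilon> (min 1 t)) - 1) * t + max \<epsilon> (min 1 t) \<le> - (t * ln t) + (\<epsilon> - \<epsilon> * ln \<epsilon>)"
proof (cases "\<epsilon> \<le> t")
  case True
  then have "max \<epsilon> (min 1 t) = t" using assms(2) by simp
  moreover have "0 \<le> - (\<epsilon> * ln \<epsilon>)" using neg_mult_ln_bounds(1) assms(3,4) by simp
  then have "0 \<le> \<epsilon> - \<epsilon> * ln \<epsilon>" using assms(3) by linarith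
  ultimately show ?thesis by (simp add: algebra_simps)
next
  case False
  then have "max \<epsilon> (min 1 t) = \<epsilon>" using assms(4) by simp
  moreover have "- ln \<epsilon> * t \<le> - ln \<epsilon> * \<epsilon>"
    using False assms(3,4) by (intro mult_left_mono) auto
  moreover have "0 \<le> - (t * ln t)" using neg_mult_ln_bounds(1) assms(1,2) by simp
  ultimately show ?thesis using assms(1) by (simp add: algebra_simps)
qed

lemma le_of_le_plus_neg_mult_ln:
  fixes x y C :: real
  assumes "\<And>\<epsilon>. 0 < \<epsilon> \<Longrightarrow> \<epsilon> \<le> 1 \<Longrightarrow> x \<le> y + C * (\<epsilon> - \<epsilon> * ln \<epsilon>)"
  shows "x \<le> y"
proof -
  have "((\<lambda>\<epsilon>::real. y + C * (\<epsilon> - \<epsilon> * ln \<epsilon>)) \<longlongrightarrow> y + C * 0) (at_right 0)"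
    by (intro tendsto_intros) real_asymp
  moreover have "eventually (\<lambda>\<epsilon>. x \<le> y + C * (\<epsilon> - \<epsilon> * ln \<epsilon>)) (at_right (0::real))"
  proof -
    have "eventually (\<lambda>\<epsilon>. \<epsilon> \<in> {0<..<1}) (at_right (0::real))"
      by (rule eventually_at_right_real) simp
    then show ?thesis by eventually_elim (auto intro: assms)
  qed
  ultimately show ?thesis
    using tendsto_le[OF trivial_limit_at_right_real _ tendsto_const] by simp
qed

lemma scale_measure_eq_density:
  assumes "r \<ge> 0"
  shows "scale_measure (ennreal r) M = density M (\<lambda>_. ennreal r)"
  by (rule measure_eqI) (auto simp: emeasure_density nn_integral_cmult_indicator)

lemma integral_scale_measure:
  fixes f :: "'a \<Rightarrow> real"
  assumes "r \<ge> 0" "f \<in> borel_measurable M"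
  shows "integral\<^sup>L (scale_measure (ennreal r) M) f = r * integral\<^sup>L M f"
  using assms by (simp add: scale_measure_eq_density integral_density)

lemma AE_scale_measure_iff:
  assumes "r > 0"
  shows "(AE x in scale_measure (ennreal r) M. P x) \<longleftrightarrow> (AE x in M. P x)"
proof -
  have "null_sets (scale_measure (ennreal r) M) = null_sets M"
    using assms by (auto simp: null_sets_def)
  then show ?thesis by (simp add: eventually_ae_filter space_scale_measure)
qed

lemma integrable_bounded_borel:
  fixes f :: "'a::topological_space \<Rightarrow> real"
  assumes "finite_measure M" "sets M = sets borel"
    and "f \<in> borel_measurable borel" "AE x in M. \<bar>f x\<bar> \<le> K"
  shows "integrable M f"
proof (rule finite_measure.integrable_const_bound[OF assms(1)])
  show "AE x in M. norm (f x) \<le> K" using assms(4) by simp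
  show "f \<in> borel_measurable M"
    by (subst measurable_cong_sets[OF assms(2) refl]) (rule assms(3))
qed

lemma integral_mono_measure:
  fixes f :: "'a \<Rightarrow> real"
  assumes "sets M = sets N" "M \<le> N" "integrable N f" "AE x in N. 0 \<le> f x"
  shows "integral\<^sup>L M f \<le> integral\<^sup>L N f"
proof -
  have f_meas_N: "f \<in> borel_measurable N" using assms(3) by (rule borel_measurable_integrable)
  then have f_meas_M: "f \<in> borel_measurable M" by (subst measurable_cong_sets[OF assms(1) refl])
  have "AE x in M. 0 \<le> f x"
  proof -
    obtain X where X: "X \<in> null_sets N" "{x \<in> space N. \<not> 0 \<le> f x} \<subseteq> X"
      using assms(4) unfolding eventually_ae_filter by blast
    have "emeasure M X \<le> emeasure N X" using le_measureD3[OF assms(2,1)] .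
    then have "X \<in> null_sets M"
      using X(1) assms(1) unfolding null_sets_def by simp
    moreover have "space M = space N" using assms(1) by (rule sets_eq_imp_space_eq)
    ultimately show ?thesis using X(2) by (intro AE_I') simp_all
  qed
  then have "integral\<^sup>L M f = enn2real (\<integral>\<^sup>+ x. ennreal (f x) \<partial>M)"
    by (rule integral_eq_nn_integral[OF f_meas_M])
  also have "\<dots> \<le> enn2real (\<integral>\<^sup>+ x. ennreal (f x) \<partial>N)"
  proof (rule enn2real_mono)
    show "(\<integral>\<^sup>+ x. ennreal (f x) \<partial>M) \<le> (\<integral>\<^sup>+ x. ennreal (f x) \<partial>N)"
      by (rule nn_integral_mono_measure[OF assms(1,2)])
    have "(\<integral>\<^sup>+ x. ennreal (f x) \<partial>N) \<le> (\<integral>\<^sup>+ x. ennreal (norm (f x)) \<partial>N)"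
      by (intro nn_integral_mono ennreal_leI) simp
    then show "(\<integral>\<^sup>+ x. ennreal (f x) \<partial>N) < top"
      using integrableD(2)[OF assms(3)] by (simp add: less_top[symmetric])
  qed
  also have "\<dots> = integral\<^sup>L N f"
    by (rule integral_eq_nn_integral[OF f_meas_N assms(4), symmetric])
  finally show ?thesis .
qed

lemma meas_partition_sets: "meas_partition A \<Longrightarrow> a \<in> A \<Longrightarrow> a \<in> sets borel"
  by (auto simp: meas_partition_def)

lemma meas_partition_covers: "meas_partition A \<Longrightarrow> \<exists>a\<in>A. x \<in> a"
  unfolding meas_partition_def by (metis UNIV_I Union_iff)

lemma sum_indicator_meas_partition:
  assumes "meas_partition A" "finite A" "a\<^sub>0 \<in> A" "x \<in> a\<^sub>0"
  shows "(\<Sum>a\<in>A. f a * indicator a x) = (f a\<^sub>0 :: real)"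
proof -
  have "x \<notin> a" if "a \<in> A - {a\<^sub>0}" for a
    using assms that unfolding meas_partition_def by blast
  then have "(\<Sum>a\<in>A - {a\<^sub>0}. f a * indicator a x) = 0" by (intro sum.neutral) simp
  then show ?thesis
    using sum.remove[OF assms(2,3), of "\<lambda>a. f a * indicator a x"] assms(4) by simp
qed

lemma subalgebra_borel_atom_algebra: "subalgebra borel (atom_algebra B)"
proof -
  have "sets (atom_algebra B) = sigma_sets UNIV {S \<in> sets borel. \<forall>b\<in>B. b \<subseteq> S \<or> b \<inter> S = {}}"
    unfolding atom_algebra_def by (rule sets_measure_of) simp
  also have "\<dots> \<subseteq> sets borel"
    by (rule sets.sigma_sets_subset') auto
  finally show ?thesis by (simp add: subalgebra_def atom_algebra_def)
qed

definition tangent_entropy :: "'a measure \<Rightarrow> 'a set set \<Rightarrow> ('a set \<Rightarrow> 'a \<Rightarrow> real) \<Rightarrow> real" where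
  "tangent_entropy M A s = (\<integral>x. (\<Sum>a\<in>A. (- ln (s a x) - 1) * indicator a x + s a x) \<partial>M)"

lemma tangent_entropy_mono_measure:
  fixes s :: "'a::topological_space set \<Rightarrow> 'a \<Rightarrow> real"
  assumes "sets M = sets borel" "sets N = sets borel" "M \<le> N" "finite_measure N"
    and "meas_partition A" "finite A"
    and s_meas: "\<And>a. s a \<in> borel_measurable borel"
    and s_bounds: "0 < \<epsilon>" "\<And>a x. \<epsilon> \<le> s a x" "\<And>a x. s a x \<le> 1"
    and sum_ge_1: "AE x in N. 1 \<le> (\<Sum>a\<in>A. s a x)"
  shows "tangent_entropy M A s \<le> tangent_entropy N A s"
  unfolding tangent_entropy_def
proof (rule integral_mono_measure)
  show "sets M = sets N" "M \<le> N" using assms(1-3) by simp_all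
  have "\<bar>(- ln (s a x) - 1) * indicator a x + s a x\<bar> \<le> 2 * (1 - ln \<epsilon>)" for a x
  proof -
    note coefficients = tangent_coefficients_abs_le[OF s_bounds(1) s_bounds(2,3)[of a x]]
    then have "\<bar>(- ln (s a x) - 1) * indicator a x\<bar> \<le> 1 - ln \<epsilon>"
      by (auto simp: indicator_def intro: order_trans[OF abs_ge_zero])
    then have "\<bar>(- ln (s a x) - 1) * indicator a x\<bar> + \<bar>s a x\<bar> \<le> 2 * (1 - ln \<epsilon>)"
      using coefficients(2) by (simp only: mult_2 add_mono)
    then show ?thesis by (rule order_trans[OF abs_triangle_ineq])
  qed
  moreover have "a \<in> sets borel" if "a \<in> A" for a
    using assms(5) that by (rule meas_partition_sets)
  ultimately show "integrable N (\<lambda>x. \<Sum>a\<in>A. (- ln (s a x) - 1) * indicator a x + s a x)"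
    by (intro Bochner_Integration.integrable_sum integrable_bounded_borel[OF assms(4,2)])
       (use s_meas in auto)
  show "AE x in N. 0 \<le> (\<Sum>a\<in>A. (- ln (s a x) - 1) * indicator a x + s a x)"
    using sum_ge_1
  proof eventually_elim
    case (elim x)
    obtain a\<^sub>0 where "a\<^sub>0 \<in> A" "x \<in> a\<^sub>0" using meas_partition_covers[OF assms(5)] by blast
    then have "(\<Sum>a\<in>A. (- ln (s a x) - 1) * indicator a x) = - ln (s a\<^sub>0 x) - 1"
      by (rule sum_indicator_meas_partition[OF assms(5,6)])
    moreover have "ln (s a\<^sub>0 x) \<le> 0" using s_bounds(1) s_bounds(2,3)[of a\<^sub>0 x] by simp
    ultimately show ?case using elim by (simp add: sum.distrib)
  qed
qed

locale partition_conditioning =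
  fixes mu :: "'a::topological_space measure" and B :: "'a set set"
  assumes sets_mu: "sets mu = sets borel" and finite_mu: "finite_measure mu"
    and mass_pos: "0 < measure mu (space mu)"
begin

abbreviation mass :: real where "mass \<equiv> measure mu (space mu)"

definition normalized :: "'a measure" where
  "normalized = scale_measure (ennreal (1 / mass)) mu"

definition cond_prob :: "'a set \<Rightarrow> 'a \<Rightarrow> real" where
  "cond_prob a x = cond_meas normalized B x a"

lemma sets_normalized: "sets normalized = sets borel"
  by (simp add: normalized_def sets_mu)

lemma prob_space_normalized: "prob_space normalized"
proof
  have "emeasure mu (space mu) = ennreal mass"
    using finite_measure.emeasure_eq_measure[OF finite_mu] by simp
  then show "emeasure normalized (space normalized) = 1"
    using mass_pos by (simp add: normalized_def space_scale_measure ennreal_mult[symmetric])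
qed

lemma finite_normalized: "finite_measure normalized"
  using prob_space_normalized by (rule prob_space.finite_measure)

lemma sigma_finite_subalgebra_normalized: "sigma_finite_subalgebra normalized (atom_algebra B)"
proof (rule finite_measure_subalgebra_is_sigma_finite)
  have "subalgebra normalized (atom_algebra B)"
    using subalgebra_borel_atom_algebra[of B] sets_normalized sets_eq_imp_space_eq[OF sets_normalized]
    by (simp add: subalgebra_def)
  then show "finite_measure_subalgebra normalized (atom_algebra B)"
    unfolding finite_measure_subalgebra_def finite_measure_subalgebra_axioms_def
    using finite_normalized by simp
qed

lemma cond_prob_measurable [measurable]: "cond_prob a \<in> borel_measurable (atom_algebra B)"
  unfolding cond_prob_def cond_meas_def by simp

lemma cond_prob_borel_measurable [measurable]: "cond_prob a \<in> borel_measurable borel"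
  using subalgebra_borel_atom_algebra cond_prob_measurable by (rule measurable_from_subalg)

lemma AE_normalized_iff: "(AE x in normalized. P x) \<longleftrightarrow> (AE x in mu. P x)"
  unfolding normalized_def using mass_pos by (intro AE_scale_measure_iff) simp

lemma integral_normalized:
  assumes "f \<in> borel_measurable borel"
  shows "integral\<^sup>L normalized f = integral\<^sup>L mu f / mass"
proof -
  have "f \<in> borel_measurable mu" by (subst measurable_cong_sets[OF sets_mu refl]) (rule assms)
  then show ?thesis
    unfolding normalized_def using mass_pos by (simp add: integral_scale_measure)
qed

lemma cond_prob_bounds:
  assumes "a \<in> sets borel"
  shows "AE x in mu. 0 \<le> cond_prob a x \<and> cond_prob a x \<le> 1"
proof -
  interpret sigma_finite_subalgebra normalized "atom_algebra B"
    by (rule sigma_finite_subalgebra_normalized)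
  have [measurable]: "a \<in> sets normalized" using assms sets_normalized by simp
  have "integrable normalized (indicator a :: 'a \<Rightarrow> real)"
    by (rule integrable_bounded_borel[OF finite_normalized sets_normalized, where K=1])
       (use assms in auto)
  then have "AE x in normalized. cond_prob a x \<le> 1"
    unfolding cond_prob_def cond_meas_def by (rule real_cond_exp_le_c) auto
  moreover have "AE x in normalized. 0 \<le> cond_prob a x"
    unfolding cond_prob_def cond_meas_def by (rule real_cond_exp_pos) auto
  ultimately show ?thesis unfolding AE_normalized_iff[symmetric] by eventually_elim simp
qed

lemma cond_prob_bounds_partition:
  assumes "meas_partition A" "finite A"
  shows "AE x in mu. \<forall>a\<in>A. 0 \<le> cond_prob a x \<and> cond_prob a x \<le> 1"
  using assms(2) by (rule AE_finite_allI) (rule cond_prob_bounds[OF meas_partition_sets[OF assms(1)]])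

lemma sum_cond_prob:
  assumes "meas_partition A" "finite A"
  shows "AE x in mu. (\<Sum>a\<in>A. cond_prob a x) = 1"
proof -
  interpret sigma_finite_subalgebra normalized "atom_algebra B"
    by (rule sigma_finite_subalgebra_normalized)
  \<comment> \<open>\<open>real_cond_exp_sum\<close> wants every summand integrable, also outside \<open>A\<close>\<close>
  define f where "f i = (if i \<in> A then indicator i else (\<lambda>_. 0::real))" for i :: "'a set"
  have "integrable normalized (f i)" for i
    unfolding f_def using meas_partition_sets[OF assms(1)]
    by (auto intro!: integrable_bounded_borel[OF finite_normalized sets_normalized, where K=1])
  then have "AE x in normalized. real_cond_exp normalized (atom_algebra B) (\<lambda>x. \<Sum>i\<in>A. f i x) x
      = (\<Sum>i\<in>A. real_cond_exp normalized (atom_algebra B) (f i) x)"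
    by (rule real_cond_exp_sum)
  moreover have "AE x in normalized. real_cond_exp normalized (atom_algebra B) (\<lambda>x. 1) x = 1"
    by (rule real_cond_exp_F_meas)
       (auto intro: integrable_bounded_borel[OF finite_normalized sets_normalized, where K=1])
  moreover have "(\<Sum>i\<in>A. f i x) = 1" for x
  proof -
    obtain a\<^sub>0 where "a\<^sub>0 \<in> A" "x \<in> a\<^sub>0" using meas_partition_covers[OF assms(1)] by blast
    then have "(\<Sum>i\<in>A. 1 * indicator i x) = (1::real)"
      by (rule sum_indicator_meas_partition[OF assms])
    then show ?thesis unfolding f_def by simp
  qed
  moreover have "(\<Sum>i\<in>A. real_cond_exp normalized (atom_algebra B) (f i) x) = (\<Sum>a\<in>A. cond_prob a x)"
    for x unfolding cond_prob_def cond_meas_def f_def by (intro sum.cong) auto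
  ultimately have "AE x in normalized. (\<Sum>a\<in>A. cond_prob a x) = 1"
    by (elim AE_mp) simp
  then show ?thesis by (simp add: AE_normalized_iff)
qed

lemma integrable_bounded:
  fixes f :: "'a \<Rightarrow> real"
  shows "f \<in> borel_measurable borel \<Longrightarrow> AE x in mu. \<bar>f x\<bar> \<le> K \<Longrightarrow> integrable mu f"
  by (rule integrable_bounded_borel[OF finite_mu sets_mu])

lemma integral_weighted_cond_prob:
  fixes g :: "'a \<Rightarrow> real"
  assumes [measurable]: "a \<in> sets borel" "g \<in> borel_measurable (atom_algebra B)"
    and g_bound: "\<And>x. \<bar>g x\<bar> \<le> K"
  shows "integrable mu (\<lambda>x. g x * cond_prob a x)"
    and "(\<integral>x. g x * cond_prob a x \<partial>mu) = (\<integral>x. g x * indicator a x \<partial>mu)"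
proof -
  interpret sigma_finite_subalgebra normalized "atom_algebra B"
    by (rule sigma_finite_subalgebra_normalized)
  have [measurable]: "g \<in> borel_measurable borel"
    using subalgebra_borel_atom_algebra assms(2) by (rule measurable_from_subalg)
  have "\<bar>g x * indicator a x\<bar> \<le> K" for x
    using g_bound[of x] abs_ge_zero[of "g x"] by (auto simp: indicator_def)
  then have "integrable normalized (\<lambda>x. g x * indicator a x)"
    by (intro integrable_bounded_borel[OF finite_normalized sets_normalized]) auto
  then have "(\<integral>x. g x * cond_prob a x \<partial>normalized) = (\<integral>x. g x * indicator a x \<partial>normalized)"
    unfolding cond_prob_def cond_meas_def
    by (rule real_cond_exp_intg(2)) (auto simp: measurable_cong_sets[OF sets_normalized refl])
  then show "(\<integral>x. g x * cond_prob a x \<partial>mu) = (\<integral>x. g x * indicator a x \<partial>mu)"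
    using mass_pos by (simp add: integral_normalized)
  have "AE x in mu. \<bar>g x * cond_prob a x\<bar> \<le> K"
    using cond_prob_bounds[OF assms(1)]
  proof eventually_elim
    case (elim x)
    have "\<bar>g x\<bar> * \<bar>cond_prob a x\<bar> \<le> K * 1"
      using elim g_bound[of x] abs_ge_zero[of "g x"] by (intro mult_mono) auto
    then show ?case by (simp add: abs_mult)
  qed
  then show "integrable mu (\<lambda>x. g x * cond_prob a x)" by (intro integrable_bounded) auto
qed

lemma integral_sum_weighted_cond_prob:
  fixes g h :: "'a set \<Rightarrow> 'a \<Rightarrow> real"
  assumes A: "meas_partition A" "finite A"
    and g_meas [measurable]: "\<And>a. g a \<in> borel_measurable (atom_algebra B)"
    and [measurable]: "\<And>a. h a \<in> borel_measurable borel"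
    and bounds: "\<And>a x. \<bar>g a x\<bar> \<le> K" "\<And>a x. \<bar>h a x\<bar> \<le> K"
  shows "integrable mu (\<lambda>x. \<Sum>a\<in>A. g a x * cond_prob a x + h a x)"
    and "(\<integral>x. (\<Sum>a\<in>A. g a x * cond_prob a x + h a x) \<partial>mu)
           = (\<integral>x. (\<Sum>a\<in>A. g a x * indicator a x + h a x) \<partial>mu)"
proof -
  have [measurable]: "g a \<in> borel_measurable borel" for a
    by (rule measurable_from_subalg[OF subalgebra_borel_atom_algebra g_meas])
  have h_int: "integrable mu (h a)" for a
    by (rule integrable_bounded[where K=K]) (auto simp: bounds)
  have g_int: "integrable mu (\<lambda>x. g a x * indicator a x)" if "a \<in> A" for a
  proof (rule integrable_bounded[where K=K])
    have "\<bar>g a x * indicator a x\<bar> \<le> K" for x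
      using bounds(1)[of a x] abs_ge_zero[of "g a x"] by (auto simp: indicator_def)
    then show "AE x in mu. \<bar>g a x * indicator a x\<bar> \<le> K" by simp
  qed (use meas_partition_sets[OF A(1) that] in measurable)
  note weighted = integral_weighted_cond_prob[OF meas_partition_sets[OF A(1)] _ bounds(1)]
  have int: "integrable mu (\<lambda>x. g a x * cond_prob a x + h a x)" if "a \<in> A" for a
    using weighted(1)[OF that] h_int by simp
  then show "integrable mu (\<lambda>x. \<Sum>a\<in>A. g a x * cond_prob a x + h a x)" by simp
  have "(\<integral>x. g a x * cond_prob a x + h a x \<partial>mu) = (\<integral>x. g a x * indicator a x + h a x \<partial>mu)"
    if "a \<in> A" for a
    using weighted[OF that] g_int[OF that] h_int by simp
  then show "(\<integral>x. (\<Sum>a\<in>A. g a x * cond_prob a x + h a x) \<partial>mu)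
           = (\<integral>x. (\<Sum>a\<in>A. g a x * indicator a x + h a x) \<partial>mu)"
    using int g_int h_int by (simp add: Bochner_Integration.integral_sum)
qed

lemma tangent_entropy_eq_integral_cond_prob:
  assumes A: "meas_partition A" "finite A"
    and s_meas: "\<And>a. s a \<in> borel_measurable (atom_algebra B)"
    and s_bounds: "0 < \<epsilon>" "\<And>a x. \<epsilon> \<le> s a x" "\<And>a x. s a x \<le> 1"
  shows "integrable mu (\<lambda>x. \<Sum>a\<in>A. (- ln (s a x) - 1) * cond_prob a x + s a x)"
    and "tangent_entropy mu A s = (\<integral>x. (\<Sum>a\<in>A. (- ln (s a x) - 1) * cond_prob a x + s a x) \<partial>mu)"
proof -
  have g_meas: "(\<lambda>x. - ln (s a x) - 1) \<in> borel_measurable (atom_algebra B)" for a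
    using s_meas by measurable
  have s_borel: "s a \<in> borel_measurable borel" for a
    by (rule measurable_from_subalg[OF subalgebra_borel_atom_algebra s_meas])
  have coefficients: "\<bar>- ln (s a x) - 1\<bar> \<le> 1 - ln \<epsilon>" "\<bar>s a x\<bar> \<le> 1 - ln \<epsilon>" for a x
    using tangent_coefficients_abs_le[OF s_bounds(1) s_bounds(2,3)[of a x]] by auto
  note weighted = integral_sum_weighted_cond_prob[OF A g_meas s_borel coefficients]
  show "integrable mu (\<lambda>x. \<Sum>a\<in>A. (- ln (s a x) - 1) * cond_prob a x + s a x)"
    by (rule weighted(1))
  show "tangent_entropy mu A s = (\<integral>x. (\<Sum>a\<in>A. (- ln (s a x) - 1) * cond_prob a x + s a x) \<partial>mu)"
    unfolding tangent_entropy_def by (rule weighted(2)[symmetric])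
qed

lemma cond_entropy_eq_integral:
  "cond_entropy mu A B = (\<integral>x. (\<Sum>a\<in>A. - (cond_prob a x * ln (cond_prob a x))) \<partial>mu)"
proof -
  have "(\<lambda>x. \<Sum>a\<in>A. - (cond_prob a x * ln (cond_prob a x))) \<in> borel_measurable borel"
    by measurable
  moreover have "cond_entropy mu A B
      = mass * (\<integral>x. (\<Sum>a\<in>A. - (cond_prob a x * ln (cond_prob a x))) \<partial>normalized)"
    using mass_pos
    by (simp add: cond_entropy_def cond_entropy_prob_def cond_prob_def normalized_def)
  ultimately show ?thesis using mass_pos by (simp add: integral_normalized)
qed

lemma integrable_entropy_integrand:
  assumes "meas_partition A" "finite A"
  shows "integrable mu (\<lambda>x. \<Sum>a\<in>A. - (cond_prob a x * ln (cond_prob a x)))"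
proof (rule Bochner_Integration.integrable_sum)
  fix a assume "a \<in> A"
  have "AE x in mu. \<bar>- (cond_prob a x * ln (cond_prob a x))\<bar> \<le> 1"
    using cond_prob_bounds[OF meas_partition_sets[OF assms(1) \<open>a \<in> A\<close>]]
    by eventually_elim (use neg_mult_ln_bounds in auto)
  then show "integrable mu (\<lambda>x. - (cond_prob a x * ln (cond_prob a x)))"
    by (intro integrable_bounded) auto
qed

lemma cond_entropy_nonneg:
  assumes "meas_partition A" "finite A"
  shows "0 \<le> cond_entropy mu A B"
  unfolding cond_entropy_eq_integral
proof (rule integral_nonneg_AE)
  show "AE x in mu. 0 \<le> (\<Sum>a\<in>A. - (cond_prob a x * ln (cond_prob a x)))"
    using cond_prob_bounds_partition[OF assms]
    by eventually_elim (auto intro!: sum_nonneg neg_mult_ln_bounds(1))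
qed

lemma cond_entropy_le_tangent_entropy:
  assumes A: "meas_partition A" "finite A"
    and s_meas: "\<And>a. s a \<in> borel_measurable (atom_algebra B)"
    and s_bounds: "0 < \<epsilon>" "\<And>a x. \<epsilon> \<le> s a x" "\<And>a x. s a x \<le> 1"
  shows "cond_entropy mu A B \<le> tangent_entropy mu A s"
proof -
  note tangent = tangent_entropy_eq_integral_cond_prob[OF A s_meas s_bounds]
  have "cond_entropy mu A B = (\<integral>x. (\<Sum>a\<in>A. - (cond_prob a x * ln (cond_prob a x))) \<partial>mu)"
    by (rule cond_entropy_eq_integral)
  also have "\<dots> \<le> (\<integral>x. (\<Sum>a\<in>A. (- ln (s a x) - 1) * cond_prob a x + s a x) \<partial>mu)"
  proof (rule integral_mono_AE[OF integrable_entropy_integrand[OF A] tangent(1)])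
    show "AE x in mu. (\<Sum>a\<in>A. - (cond_prob a x * ln (cond_prob a x)))
        \<le> (\<Sum>a\<in>A. (- ln (s a x) - 1) * cond_prob a x + s a x)"
      using cond_prob_bounds_partition[OF A]
    proof eventually_elim
      case (elim x)
      have "0 < s a x" for a using s_bounds(1) s_bounds(2)[of a x] by linarith
      then show ?case using elim by (auto intro!: sum_mono neg_mult_ln_le_tangent)
    qed
  qed
  also have "\<dots> = tangent_entropy mu A s" by (rule tangent(2)[symmetric])
  finally show ?thesis .
qed

lemma tangent_entropy_truncation_le:
  assumes A: "meas_partition A" "finite A" and "0 < \<epsilon>" "\<epsilon> \<le> 1"
  shows "tangent_entropy mu A (\<lambda>a x. max \<epsilon> (min 1 (cond_prob a x)))
           \<le> cond_entropy mu A B + card A * mass * (\<epsilon> - \<epsilon> * ln \<epsilon>)"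
proof -
  define s where "s a x = max \<epsilon> (min 1 (cond_prob a x))" for a x
  define \<delta> where "\<delta> = \<epsilon> - \<epsilon> * ln \<epsilon>"
  have s_meas: "s a \<in> borel_measurable (atom_algebra B)" for a unfolding s_def by measurable
  have s_bounds: "\<epsilon> \<le> s a x" "s a x \<le> 1" for a x unfolding s_def using assms(4) by auto
  note tangent = tangent_entropy_eq_integral_cond_prob[OF A s_meas \<open>0 < \<epsilon>\<close> s_bounds]
  have "tangent_entropy mu A s = (\<integral>x. (\<Sum>a\<in>A. (- ln (s a x) - 1) * cond_prob a x + s a x) \<partial>mu)"
    by (rule tangent(2))
  also have "\<dots> \<le> (\<integral>x. (\<Sum>a\<in>A. - (cond_prob a x * ln (cond_prob a x))) + card A * \<delta> \<partial>mu)"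
  proof (rule integral_mono_AE[OF tangent(1)])
    show "integrable mu (\<lambda>x. (\<Sum>a\<in>A. - (cond_prob a x * ln (cond_prob a x))) + card A * \<delta>)"
      using integrable_entropy_integrand[OF A] finite_measure.integrable_const[OF finite_mu]
      by (rule Bochner_Integration.integrable_add)
    show "AE x in mu. (\<Sum>a\<in>A. (- ln (s a x) - 1) * cond_prob a x + s a x)
        \<le> (\<Sum>a\<in>A. - (cond_prob a x * ln (cond_prob a x))) + card A * \<delta>"
      using cond_prob_bounds_partition[OF A]
    proof eventually_elim
      case (elim x)
      have "(\<Sum>a\<in>A. (- ln (s a x) - 1) * cond_prob a x + s a x)
          \<le> (\<Sum>a\<in>A. - (cond_prob a x * ln (cond_prob a x)) + \<delta>)"
        unfolding s_def \<delta>_def using elim assms(3,4)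
        by (intro sum_mono tangent_at_truncation_le) auto
      then show ?case by (simp only: sum.distrib sum_constant)
    qed
  qed
  also have "\<dots> = cond_entropy mu A B + card A * mass * \<delta>"
    using Bochner_Integration.integral_add[OF integrable_entropy_integrand[OF A]
        finite_measure.integrable_const[OF finite_mu]]
    by (simp add: cond_entropy_eq_integral mult_ac)
  finally show ?thesis unfolding s_def \<delta>_def .
qed

end

lemma cond_entropy_nonneg:
  fixes mu :: "'a::topological_space measure"
  assumes "sets mu = sets borel" "finite_measure mu" "meas_partition A" "finite A"
  shows "0 \<le> cond_entropy mu A B"
proof (cases "measure mu (space mu) = 0")
  case False
  then have "0 < measure mu (space mu)" using measure_nonneg[of mu "space mu"] by linarith
  then interpret partition_conditioning mu B by (rule partition_conditioning.intro[OF assms(1,2)])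
  show ?thesis using assms(3,4) by (rule cond_entropy_nonneg)
qed (simp add: cond_entropy_def)

lemma cond_entropy_le_plus_truncation_error:
  fixes mu\<^sub>1 mu\<^sub>2 :: "'a::topological_space measure"
  assumes sets: "sets mu\<^sub>1 = sets borel" "sets mu\<^sub>2 = sets borel"
    and finite: "finite_measure mu\<^sub>1" "finite_measure mu\<^sub>2"
    and le: "mu\<^sub>2 \<le> mu\<^sub>1" and pos: "0 < measure mu\<^sub>2 (space mu\<^sub>2)"
    and A: "meas_partition A" "finite A" and \<epsilon>: "0 < \<epsilon>" "\<epsilon> \<le> 1"
  shows "cond_entropy mu\<^sub>2 A B
           \<le> cond_entropy mu\<^sub>1 A B + card A * measure mu\<^sub>1 (space mu\<^sub>1) * (\<epsilon> - \<epsilon> * ln \<epsilon>)"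
proof -
  interpret p\<^sub>2: partition_conditioning mu\<^sub>2 B
    by (rule partition_conditioning.intro[OF sets(2) finite(2) pos])
  have "space mu\<^sub>2 = space mu\<^sub>1" using sets by (simp add: sets_eq_imp_space_eq)
  moreover have "emeasure mu\<^sub>2 (space mu\<^sub>1) \<le> emeasure mu\<^sub>1 (space mu\<^sub>1)"
    using le sets by (simp add: le_measureD3)
  ultimately have "measure mu\<^sub>2 (space mu\<^sub>2) \<le> measure mu\<^sub>1 (space mu\<^sub>1)"
    using finite by (simp add: finite_measure.emeasure_eq_measure)
  then interpret p\<^sub>1: partition_conditioning mu\<^sub>1 B
    using pos by (intro partition_conditioning.intro[OF sets(1) finite(1)]) simp
  define s where "s a x = max \<epsilon> (min 1 (p\<^sub>1.cond_prob a x))" for a x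
  have s_meas: "s a \<in> borel_measurable (atom_algebra B)" for a unfolding s_def by measurable
  have s_bounds: "\<epsilon> \<le> s a x" "s a x \<le> 1" for a x unfolding s_def using \<epsilon>(2) by auto
  have "cond_entropy mu\<^sub>2 A B \<le> tangent_entropy mu\<^sub>2 A s"
    by (rule p\<^sub>2.cond_entropy_le_tangent_entropy[OF A s_meas \<epsilon>(1) s_bounds])
  also have "\<dots> \<le> tangent_entropy mu\<^sub>1 A s"
  proof (rule tangent_entropy_mono_measure[OF sets(2,1) le finite(1) A _ \<epsilon>(1) s_bounds])
    show "s a \<in> borel_measurable borel" for a
      by (rule measurable_from_subalg[OF subalgebra_borel_atom_algebra s_meas])
    show "AE x in mu\<^sub>1. 1 \<le> (\<Sum>a\<in>A. s a x)"
      using p\<^sub>1.sum_cond_prob[OF A] p\<^sub>1.cond_prob_bounds_partition[OF A]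
    proof eventually_elim
      case (elim x)
      have "(\<Sum>a\<in>A. p\<^sub>1.cond_prob a x) \<le> (\<Sum>a\<in>A. s a x)"
        unfolding s_def using elim(2) by (intro sum_mono) auto
      then show ?case using elim(1) by simp
    qed
  qed
  also have "\<dots> \<le> cond_entropy mu\<^sub>1 A B + card A * measure mu\<^sub>1 (space mu\<^sub>1) * (\<epsilon> - \<epsilon> * ln \<epsilon>)"
    unfolding s_def by (rule p\<^sub>1.tangent_entropy_truncation_le[OF A \<epsilon>])
  finally show ?thesis .
qed

theorem lemma3p2:
  fixes mu1 mu2 :: "'a::topological_space measure"
    and A B :: "'a set set"
  assumes "sets mu1 = sets borel" and "sets mu2 = sets borel"
    and "finite_measure mu1" and "finite_measure mu2"
    and "\<exists>m. sets m = sets borel \<and>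
           (\<forall>S\<in>sets borel. emeasure mu1 S = emeasure mu2 S + emeasure m S)"
    and "meas_partition A" and "finite A"
    and "meas_partition B"
  shows "cond_entropy mu1 A B \<ge> cond_entropy mu2 A B"
proof -
  obtain m where "\<forall>S\<in>sets borel. emeasure mu1 S = emeasure mu2 S + emeasure m S"
    using assms(5) by blast
  then have le: "mu2 \<le> mu1"
    using assms(1,2) by (subst le_measure) auto
  show ?thesis
  proof (cases "measure mu2 (space mu2) = 0")
    case True
    then show ?thesis
      using cond_entropy_nonneg[OF assms(1,3,6,7)] by (simp add: cond_entropy_def)
  next
    case False
    then have "0 < measure mu2 (space mu2)" using measure_nonneg[of mu2 "space mu2"] by linarith
    note approx = cond_entropy_le_plus_truncation_error[OF assms(1-4) le this assms(6,7)]
    show ?thesis by (rule le_of_le_plus_neg_mult_ln) (rule approx)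
  qed
qed

end
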